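(* Let $M$ be a finite abelian group of exponent greater than $2$, and let $f$ be a half-automorphism of $L_M$. Then $f((K,1))\in\mathcal{H}_M$.
   Context: Let $K=\{1,a,b,c\}$ be the Klein four-group. Set $L_M=K\times M$ with the operation $(A,x)*(B,y)=(AB,xy)$ if $B=1$, and $(A,x)*(B,y)=(AB,x^{-1}y)$ if $B\neq 1$. Write $(K,1)=\{(A,1):A\in K\}$ and $(1,M)=\{(1,x):x\in M\}$. Let $\mathcal{H}_M$ be the set of subloops $H$ of $L_M$ that are isomorphic to $K$ and satisfy $|H\cap(1,M)|=1$. A half-automorphism of a loop $L$ is a bijection $f:L\to L$ such that $f(XY)\in\{f(X)f(Y),f(Y)f(X)\}$ for all $X,Y\in L$. *)

theory Defs
  imports "HOL-Algebra.Group"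
begin

text \<open>The Klein four-group K, realised as bool x bool with componentwise xor;
  1 = (False,False), a = (True,False), b = (False,True), c = (True,True).\<close>

type_synonym klein = "bool \<times> bool"

definition klein_one :: klein where "klein_one = (False, False)"

definition klein_mult :: "klein \<Rightarrow> klein \<Rightarrow> klein" where
  "klein_mult A B = ((fst A \<noteq> fst B), (snd A \<noteq> snd B))"

definition group_exponent :: "('a, 'b) monoid_scheme \<Rightarrow> nat" where
  "group_exponent G = (LEAST n. 0 < n \<and> (\<forall>x\<in>carrier G. x [^]\<^bsub>G\<^esub> n = \<one>\<^bsub>G\<^esub>))"

definition L_carrier :: "('a, 'b) monoid_scheme \<Rightarrow> (klein \<times> 'a) set" where
  "L_carrier G = UNIV \<times> carrier G"

definition L_mult :: "('a, 'b) monoid_scheme \<Rightarrow> klein \<times> 'a \<Rightarrow> klein \<times> 'a \<Rightarrow> klein \<times> 'a" where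
  "L_mult G X Y = (case X of (A, x) \<Rightarrow> case Y of (B, y) \<Rightarrow>
     (klein_mult A B, if B = klein_one then x \<otimes>\<^bsub>G\<^esub> y else inv\<^bsub>G\<^esub> x \<otimes>\<^bsub>G\<^esub> y))"

definition L_one :: "('a, 'b) monoid_scheme \<Rightarrow> klein \<times> 'a" where
  "L_one G = (klein_one, \<one>\<^bsub>G\<^esub>)"

definition K1 :: "('a, 'b) monoid_scheme \<Rightarrow> (klein \<times> 'a) set" where
  "K1 G = {(A, \<one>\<^bsub>G\<^esub>) | A. True}"

definition oneM :: "('a, 'b) monoid_scheme \<Rightarrow> (klein \<times> 'a) set" where
  "oneM G = {(klein_one, x) | x. x \<in> carrier G}"

definition subloop :: "('a, 'b) monoid_scheme \<Rightarrow> (klein \<times> 'a) set \<Rightarrow> bool" where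
  "subloop G H \<longleftrightarrow> H \<subseteq> L_carrier G \<and> L_one G \<in> H \<and>
     (\<forall>X\<in>H. \<forall>Y\<in>H. L_mult G X Y \<in> H) \<and>
     (\<forall>X\<in>H. \<forall>Y\<in>H. (\<exists>Z\<in>H. L_mult G X Z = Y) \<and> (\<exists>Z\<in>H. L_mult G Z X = Y))"

definition iso_to_klein :: "('a, 'b) monoid_scheme \<Rightarrow> (klein \<times> 'a) set \<Rightarrow> bool" where
  "iso_to_klein G H \<longleftrightarrow> (\<exists>\<phi>. bij_betw \<phi> (UNIV :: klein set) H \<and>
     (\<forall>A B. \<phi> (klein_mult A B) = L_mult G (\<phi> A) (\<phi> B)))"

definition H_M :: "('a, 'b) monoid_scheme \<Rightarrow> (klein \<times> 'a) set set" where
  "H_M G = {H. subloop G H \<and> iso_to_klein G H \<and> card (H \<inter> oneM G) = 1}"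

definition half_automorphism :: "('a, 'b) monoid_scheme \<Rightarrow> (klein \<times> 'a \<Rightarrow> klein \<times> 'a) \<Rightarrow> bool" where
  "half_automorphism G f \<longleftrightarrow> bij_betw f (L_carrier G) (L_carrier G) \<and>
     (\<forall>X\<in>L_carrier G. \<forall>Y\<in>L_carrier G.
        f (L_mult G X Y) \<in> {L_mult G (f X) (f Y), L_mult G (f Y) (f X)})"

end

theory Submission
  imports Defs
begin

text \<open>Squaring in \<open>L_M\<close> sends every element outside \<open>(1,M)\<close> to the identity, and a
  half-automorphism \<open>f\<close> commutes with squaring. Since \<open>M\<close> has an element \<open>y\<close> with
  \<open>y\<^sup>2 \<noteq> 1\<close>, this forces \<open>f\<close> to preserve \<open>(1,M)\<close> and its complement. Writing
  \<open>K - {1} = {A,B,C}\<close>, the elements \<open>(A,y)\<close> and \<open>(A,y\<inverse>)\<close> factor both as \<open>(A,1)(1,y\<^sup>\<plusminus>\<^sup>1)\<close>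
  and as \<open>(C,1)(B,y)\<close>, \<open>(B,y)(C,1)\<close>; comparing the \<open>M\<close>-coordinates of their images shows
  that the \<open>M\<close>-coordinate of \<open>f(A,1)\<close> squares to \<open>1\<close>. Such elements commute in \<open>L_M\<close>, so
  \<open>A \<mapsto> f(A,1)\<close> is an injective homomorphism whose image meets \<open>(1,M)\<close> only in the identity.\<close>

lemma klein_mult_one [simp]:
  "klein_mult A klein_one = A" "klein_mult klein_one A = A"
  by (auto simp: klein_mult_def klein_one_def)

lemma klein_mult_self [simp]: "klein_mult A A = klein_one"
  by (simp add: klein_mult_def klein_one_def)

lemma klein_mult_commute: "klein_mult A B = klein_mult B A"
  by (auto simp: klein_mult_def)

lemma klein_mult_assoc: "klein_mult (klein_mult A B) C = klein_mult A (klein_mult B C)"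
  by (auto simp: klein_mult_def)

lemma klein_mult_eq_one_iff: "klein_mult A B = klein_one \<longleftrightarrow> A = B"
  by (cases A; cases B) (auto simp: klein_mult_def klein_one_def)

lemma klein_other_nonidentity:
  obtains B where "B \<noteq> klein_one" "B \<noteq> A"
  by (metis (full_types) klein_one_def prod.inject)

lemma L_mult_Pair [simp]:
  "L_mult G (A, x) (B, y) =
     (klein_mult A B, if B = klein_one then x \<otimes>\<^bsub>G\<^esub> y else inv\<^bsub>G\<^esub> x \<otimes>\<^bsub>G\<^esub> y)"
  by (simp add: L_mult_def)

lemma fst_L_mult [simp]: "fst (L_mult G X Y) = klein_mult (fst X) (fst Y)"
  by (cases X; cases Y) simp

lemma L_carrier_iff [simp]: "X \<in> L_carrier G \<longleftrightarrow> snd X \<in> carrier G"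
  by (cases X) (simp add: L_carrier_def)

lemma half_automorphism_closed:
  "half_automorphism G f \<Longrightarrow> X \<in> L_carrier G \<Longrightarrow> f X \<in> L_carrier G"
  unfolding half_automorphism_def bij_betw_def by blast

lemma half_automorphism_eq_iff:
  "half_automorphism G f \<Longrightarrow> X \<in> L_carrier G \<Longrightarrow> Y \<in> L_carrier G \<Longrightarrow> f X = f Y \<longleftrightarrow> X = Y"
  unfolding half_automorphism_def bij_betw_def inj_on_def by blast

lemma half_automorphism_mult_cases:
  assumes "half_automorphism G f" "X \<in> L_carrier G" "Y \<in> L_carrier G"
  shows "f (L_mult G X Y) = L_mult G (f X) (f Y) \<or> f (L_mult G X Y) = L_mult G (f Y) (f X)"
  using assms unfolding half_automorphism_def by blast

lemma half_automorphism_square: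
  "half_automorphism G f \<Longrightarrow> X \<in> L_carrier G \<Longrightarrow> f (L_mult G X X) = L_mult G (f X) (f X)"
  using half_automorphism_mult_cases by blast

lemma (in monoid) exponent_gt_two_imp_non_involution:
  assumes "group_exponent G > 2"
  obtains y where "y \<in> carrier G" "y \<otimes> y \<noteq> \<one>"
proof -
  have "\<not> (\<forall>x\<in>carrier G. x [^] (2::nat) = \<one>)"
  proof
    assume "\<forall>x\<in>carrier G. x [^] (2::nat) = \<one>"
    then have "group_exponent G \<le> 2"
      unfolding group_exponent_def by (intro Least_le) simp
    with assms show False by simp
  qed
  with that show thesis by (auto simp: numeral_2_eq_2)
qed

context comm_group
begin

lemma L_mult_closed:
  "X \<in> L_carrier G \<Longrightarrow> Y \<in> L_carrier G \<Longrightarrow> L_mult G X Y \<in> L_carrier G"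
  by (cases X; cases Y) simp

lemma L_mult_self:
  "x \<in> carrier G \<Longrightarrow> L_mult G (A, x) (A, x) = (klein_one, if A = klein_one then x \<otimes> x else \<one>)"
  by simp

lemma L_mult_commute_of_involutions:
  assumes "snd X \<in> carrier G" "snd Y \<in> carrier G"
    and "snd X \<otimes> snd X = \<one>" "snd Y \<otimes> snd Y = \<one>"
  shows "L_mult G X Y = L_mult G Y X"
proof -
  have "inv (snd X) = snd X" "inv (snd Y) = snd Y" using assms inv_equality by blast+
  with assms show ?thesis by (cases X; cases Y) (simp add: klein_mult_commute m_comm)
qed

lemma snd_mult_of_distinct_in_pair:
  assumes "X \<in> {(\<sigma>, u), (\<sigma>, w)}" "Y \<in> {(\<sigma>, u), (\<sigma>, w)}" "X \<noteq> Y"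
    and "u \<in> carrier G" "w \<in> carrier G"
  shows "snd X \<otimes> snd Y = u \<otimes> w"
  using assms m_comm by auto

lemma half_automorphism_one:
  assumes h: "half_automorphism G f"
  shows "f (klein_one, \<one>) = (klein_one, \<one>)"
proof -
  obtain A x where fe: "f (klein_one, \<one>) = (A, x)" by fastforce
  with half_automorphism_closed[OF h, of "(klein_one, \<one>)"] have x: "x \<in> carrier G" by simp
  have "L_mult G (klein_one, \<one>) (klein_one, \<one>) = (klein_one, \<one>)" by simp
  then have "(A, x) = L_mult G (A, x) (A, x)"
    using half_automorphism_square[OF h, of "(klein_one, \<one>)"] fe
    by (metis L_carrier_iff one_closed snd_conv)
  also have "\<dots> = (klein_one, if A = klein_one then x \<otimes> x else \<one>)"
    using L_mult_self x .
  finally have "A = klein_one" "x = x \<otimes> x" by auto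
  with x fe show ?thesis by simp
qed

lemma half_automorphism_square_eq_one_iff:
  assumes h: "half_automorphism G f" and X: "X \<in> L_carrier G"
  shows "L_mult G (f X) (f X) = (klein_one, \<one>) \<longleftrightarrow> L_mult G X X = (klein_one, \<one>)"
proof -
  have "L_mult G (f X) (f X) = (klein_one, \<one>) \<longleftrightarrow> f (L_mult G X X) = f (klein_one, \<one>)"
    using half_automorphism_square[OF h X] half_automorphism_one[OF h] by simp
  also have "\<dots> \<longleftrightarrow> L_mult G X X = (klein_one, \<one>)"
    using half_automorphism_eq_iff[OF h] L_mult_closed X by simp
  finally show ?thesis .
qed

lemma half_automorphism_non_involution:
  assumes h: "half_automorphism G f" and x: "x \<in> carrier G" "x \<otimes> x \<noteq> \<one>"
  shows "fst (f (klein_one, x)) = klein_one"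
    and "snd (f (klein_one, x)) \<otimes> snd (f (klein_one, x)) \<noteq> \<one>"
proof -
  obtain \<sigma> v where fx: "f (klein_one, x) = (\<sigma>, v)" by fastforce
  with half_automorphism_closed[OF h, of "(klein_one, x)"] x have v: "v \<in> carrier G" by simp
  have "L_mult G (\<sigma>, v) (\<sigma>, v) \<noteq> (klein_one, \<one>)"
    using half_automorphism_square_eq_one_iff[OF h, of "(klein_one, x)"] fx x by simp
  with v have "\<sigma> = klein_one \<and> v \<otimes> v \<noteq> \<one>" by (auto split: if_splits)
  with fx show "fst (f (klein_one, x)) = klein_one"
    and "snd (f (klein_one, x)) \<otimes> snd (f (klein_one, x)) \<noteq> \<one>" by simp_all
qed

lemma half_automorphism_fst_oneM:
  assumes h: "half_automorphism G f" and x: "x \<in> carrier G"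
    and y: "y \<in> carrier G" "y \<otimes> y \<noteq> \<one>"
  shows "fst (f (klein_one, x)) = klein_one"
proof (cases "x \<otimes> x = \<one>")
  case False
  with half_automorphism_non_involution[OF h x] show ?thesis by simp
next
  case True
  have "(x \<otimes> y) \<otimes> (x \<otimes> y) = (x \<otimes> x) \<otimes> (y \<otimes> y)" using x y by (simp add: m_ac)
  with True x y have "fst (f (klein_one, x \<otimes> y)) = klein_one"
    using half_automorphism_non_involution(1)[OF h, of "x \<otimes> y"] by simp
  moreover have "fst (f (klein_one, y)) = klein_one"
    using half_automorphism_non_involution[OF h y] by simp
  ultimately show ?thesis
    using half_automorphism_mult_cases[OF h, of "(klein_one, x)" "(klein_one, y)"] x y
    by (auto simp: klein_mult_commute)
qed

lemma half_automorphism_fst_outside_oneM: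
  assumes h: "half_automorphism G f" and A: "A \<noteq> klein_one" and z: "z \<in> carrier G"
    and y: "y \<in> carrier G" "y \<otimes> y \<noteq> \<one>"
  shows "fst (f (A, z)) \<noteq> klein_one"
proof
  assume "fst (f (A, z)) = klein_one"
  then obtain w where fz: "f (A, z) = (klein_one, w)" by (cases "f (A, z)") auto
  with half_automorphism_closed[OF h, of "(A, z)"] z have w: "w \<in> carrier G" by simp
  obtain v where fy: "f (klein_one, y) = (klein_one, v)" and vv: "v \<otimes> v \<noteq> \<one>"
    using half_automorphism_non_involution[OF h y] by (cases "f (klein_one, y)") auto
  with half_automorphism_closed[OF h, of "(klein_one, y)"] y have v: "v \<in> carrier G" by simp
  have "w \<otimes> w = \<one>"
    using half_automorphism_square_eq_one_iff[OF h, of "(A, z)"] A z fz by simp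
  have "f (A, z \<otimes> y) = (klein_one, w \<otimes> v)"
    using half_automorphism_mult_cases[OF h, of "(A, z)" "(klein_one, y)"] fz fy z y v w
    by (auto simp: m_comm)
  then have "(w \<otimes> v) \<otimes> (w \<otimes> v) = \<one>"
    using half_automorphism_square_eq_one_iff[OF h, of "(A, z \<otimes> y)"] A z y by simp
  also have "(w \<otimes> v) \<otimes> (w \<otimes> v) = (w \<otimes> w) \<otimes> (v \<otimes> v)" using v w by (simp add: m_ac)
  finally show False using \<open>w \<otimes> w = \<one>\<close> vv v by simp
qed

lemma half_automorphism_oneM_inv:
  assumes h: "half_automorphism G f" and x: "x \<in> carrier G"
    and "fst (f (klein_one, x)) = klein_one" "fst (f (klein_one, inv x)) = klein_one"
  shows "snd (f (klein_one, inv x)) = inv (snd (f (klein_one, x)))"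
proof -
  obtain v v' where fx: "f (klein_one, x) = (klein_one, v)"
    and fx': "f (klein_one, inv x) = (klein_one, v')"
    using assms(3,4) by (metis prod.collapse)
  have v: "v \<in> carrier G" "v' \<in> carrier G"
    using half_automorphism_closed[OF h] fx fx' x by (metis L_carrier_iff inv_closed snd_conv)+
  have "v \<otimes> v' = \<one> \<or> v' \<otimes> v = \<one>"
    using half_automorphism_mult_cases[OF h, of "(klein_one, x)" "(klein_one, inv x)"]
      fx fx' x half_automorphism_one[OF h] by auto
  then have "v' \<otimes> v = \<one>" using v by (metis m_comm)
  with v fx fx' show ?thesis by (simp add: inv_equality)
qed

lemma half_automorphism_snd_mult_via_oneM:
  assumes h: "half_automorphism G f" and A: "A \<noteq> klein_one"
    and y: "y \<in> carrier G" "y \<otimes> y \<noteq> \<one>"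
  shows "snd (f (A, y)) \<otimes> snd (f (A, inv y)) = snd (f (A, \<one>)) \<otimes> snd (f (A, \<one>))"
proof -
  have ne: "f (A, y) \<noteq> f (A, inv y)"
    using half_automorphism_eq_iff[OF h] y by (simp, metis l_inv)
  obtain \<sigma> p where fA: "f (A, \<one>) = (\<sigma>, p)" by fastforce
  have p: "p \<in> carrier G" using half_automorphism_closed[OF h, of "(A, \<one>)"] fA by simp
  have \<sigma>: "\<sigma> \<noteq> klein_one"
    using half_automorphism_fst_outside_oneM[OF h A one_closed y] fA by simp
  obtain v where fy: "f (klein_one, y) = (klein_one, v)"
    using half_automorphism_fst_oneM[OF h y(1) y] by (metis prod.collapse)
  have fy': "f (klein_one, inv y) = (klein_one, inv v)"
    using half_automorphism_oneM_inv[OF h y(1)] half_automorphism_fst_oneM[OF h _ y] fy y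
    by (metis inv_closed prod.collapse snd_conv)
  have v: "v \<in> carrier G" using half_automorphism_closed[OF h, of "(klein_one, y)"] fy y by simp
  have "f (A, y) \<in> {(\<sigma>, p \<otimes> v), (\<sigma>, p \<otimes> inv v)}"
    and "f (A, inv y) \<in> {(\<sigma>, p \<otimes> v), (\<sigma>, p \<otimes> inv v)}"
    using half_automorphism_mult_cases[OF h, of "(A, \<one>)" "(klein_one, y)"]
      half_automorphism_mult_cases[OF h, of "(A, \<one>)" "(klein_one, inv y)"] fA fy fy' \<sigma> p v y
    by (auto simp: m_comm)
  then have "snd (f (A, y)) \<otimes> snd (f (A, inv y)) = (p \<otimes> v) \<otimes> (p \<otimes> inv v)"
    by (rule snd_mult_of_distinct_in_pair[OF _ _ ne]) (use p v in simp_all)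
  also have "\<dots> = p \<otimes> p" using p v by (simp add: m_ac)
  finally show ?thesis using fA by simp
qed

lemma half_automorphism_snd_mult_via_K:
  assumes h: "half_automorphism G f" and A: "A \<noteq> klein_one"
    and y: "y \<in> carrier G" "y \<otimes> y \<noteq> \<one>"
  shows "snd (f (A, y)) \<otimes> snd (f (A, inv y)) = \<one>"
proof -
  have ne: "f (A, y) \<noteq> f (A, inv y)"
    using half_automorphism_eq_iff[OF h] y by (simp, metis l_inv)
  obtain B where B: "B \<noteq> klein_one" "B \<noteq> A" using klein_other_nonidentity .
  define C where "C = klein_mult A B"
  have C: "C \<noteq> klein_one" using B by (simp add: C_def klein_mult_eq_one_iff)
  have CB: "klein_mult C B = A" "klein_mult B C = A"
    unfolding C_def by (metis klein_mult_assoc klein_mult_commute klein_mult_one(1) klein_mult_self)+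
  obtain \<tau> r where fC: "f (C, \<one>) = (\<tau>, r)" by fastforce
  obtain \<rho> t where fB: "f (B, y) = (\<rho>, t)" by fastforce
  have rt: "r \<in> carrier G" "t \<in> carrier G"
    using half_automorphism_closed[OF h, of "(C, \<one>)"] half_automorphism_closed[OF h, of "(B, y)"]
      fC fB y by simp_all
  have "\<tau> \<noteq> klein_one" "\<rho> \<noteq> klein_one"
    using half_automorphism_fst_outside_oneM[OF h C one_closed y]
      half_automorphism_fst_outside_oneM[OF h B(1) y(1) y] fC fB by simp_all
  then have "f (A, y) \<in> {(klein_mult \<tau> \<rho>, inv r \<otimes> t), (klein_mult \<tau> \<rho>, inv t \<otimes> r)}"
    and "f (A, inv y) \<in> {(klein_mult \<tau> \<rho>, inv r \<otimes> t), (klein_mult \<tau> \<rho>, inv t \<otimes> r)}"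
    using half_automorphism_mult_cases[OF h, of "(C, \<one>)" "(B, y)"]
      half_automorphism_mult_cases[OF h, of "(B, y)" "(C, \<one>)"] fC fB y rt B C CB
    by (auto simp: klein_mult_commute[of \<rho>])
  then have "snd (f (A, y)) \<otimes> snd (f (A, inv y)) = (inv r \<otimes> t) \<otimes> (inv t \<otimes> r)"
    by (rule snd_mult_of_distinct_in_pair[OF _ _ ne]) (use rt in simp_all)
  also have "\<dots> = \<one>" using rt by (simp add: m_assoc flip: m_assoc[of t "inv t"])
  finally show ?thesis .
qed

lemma half_automorphism_K1_involution:
  assumes h: "half_automorphism G f" and y: "y \<in> carrier G" "y \<otimes> y \<noteq> \<one>"
  shows "snd (f (A, \<one>)) \<otimes> snd (f (A, \<one>)) = \<one>"
proof (cases "A = klein_one")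
  case True
  with half_automorphism_one[OF h] show ?thesis by simp
next
  case False
  with half_automorphism_snd_mult_via_oneM[OF h _ y] half_automorphism_snd_mult_via_K[OF h _ y]
  show ?thesis by simp
qed

lemma half_automorphism_K1_hom:
  assumes h: "half_automorphism G f"
    and inv: "\<And>A. snd (f (A, \<one>)) \<otimes> snd (f (A, \<one>)) = \<one>"
  shows "f (klein_mult A B, \<one>) = L_mult G (f (A, \<one>)) (f (B, \<one>))"
proof -
  have c: "snd (f (A, \<one>)) \<in> carrier G" for A
    using half_automorphism_closed[OF h, of "(A, \<one>)"] by simp
  have "L_mult G (f (B, \<one>)) (f (A, \<one>)) = L_mult G (f (A, \<one>)) (f (B, \<one>))"
    using L_mult_commute_of_involutions[OF c c inv inv] .
  moreover have "L_mult G (A, \<one>) (B, \<one>) = (klein_mult A B, \<one>)" by simp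
  ultimately show ?thesis
    using half_automorphism_mult_cases[OF h, of "(A, \<one>)" "(B, \<one>)"] by auto
qed

lemma range_klein_embedding_in_H_M:
  assumes "inj \<phi>" and hom: "\<And>A B. \<phi> (klein_mult A B) = L_mult G (\<phi> A) (\<phi> B)"
    and "range \<phi> \<subseteq> L_carrier G" and one: "\<phi> klein_one = (klein_one, \<one>)"
    and fst: "\<And>A. fst (\<phi> A) = klein_one \<Longrightarrow> A = klein_one"
  shows "range \<phi> \<in> H_M G"
proof -
  have "subloop G (range \<phi>)"
    unfolding subloop_def
  proof (intro conjI ballI)
    show "L_one G \<in> range \<phi>" using one unfolding L_one_def by (metis rangeI)
    fix X Y assume "X \<in> range \<phi>" "Y \<in> range \<phi>"
    then obtain A B where XY: "X = \<phi> A" "Y = \<phi> B" by blast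
    show "L_mult G X Y \<in> range \<phi>" using hom[of A B] XY by (metis rangeI)
    have "L_mult G X (\<phi> (klein_mult A B)) = Y"
      using hom[of A "klein_mult A B"] XY by (simp add: klein_mult_assoc[symmetric])
    then show "\<exists>Z\<in>range \<phi>. L_mult G X Z = Y" by blast
    have "L_mult G (\<phi> (klein_mult B A)) X = Y"
      using hom[of "klein_mult B A" A] XY by (simp add: klein_mult_assoc)
    then show "\<exists>Z\<in>range \<phi>. L_mult G Z X = Y" by blast
  qed (use assms in auto)
  moreover have "iso_to_klein G (range \<phi>)"
    unfolding iso_to_klein_def using \<open>inj \<phi>\<close> hom inj_on_imp_bij_betw by blast
  moreover have "range \<phi> \<inter> oneM G = {(klein_one, \<one>)}"
  proof
    show "range \<phi> \<inter> oneM G \<subseteq> {(klein_one, \<one>)}"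
    proof
      fix X assume "X \<in> range \<phi> \<inter> oneM G"
      then have "X \<in> range \<phi>" "fst X = klein_one" unfolding oneM_def by auto
      then obtain A where "X = \<phi> A" "fst (\<phi> A) = klein_one" by blast
      with one fst[of A] show "X \<in> {(klein_one, \<one>)}" by simp
    qed
    show "{(klein_one, \<one>)} \<subseteq> range \<phi> \<inter> oneM G"
      using one unfolding oneM_def by (auto intro: range_eqI[where x = klein_one])
  qed
  ultimately show ?thesis unfolding H_M_def by simp
qed

lemma half_automorphism_image_K1_in_H_M:
  assumes "group_exponent G > 2" and "half_automorphism G f"
  shows "f ` K1 G \<in> H_M G"
proof -
  note h = \<open>half_automorphism G f\<close>
  obtain y where y: "y \<in> carrier G" "y \<otimes> y \<noteq> \<one>"
    using exponent_gt_two_imp_non_involution \<open>group_exponent G > 2\<close> by blast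
  define \<phi> where "\<phi> A = f (A, \<one>)" for A
  have "range \<phi> \<in> H_M G"
  proof (rule range_klein_embedding_in_H_M)
    show "inj \<phi>" unfolding inj_def \<phi>_def using half_automorphism_eq_iff[OF h] by simp
    show "\<phi> (klein_mult A B) = L_mult G (\<phi> A) (\<phi> B)" for A B
      unfolding \<phi>_def
      using half_automorphism_K1_hom[OF h half_automorphism_K1_involution[OF h y]] .
    show "range \<phi> \<subseteq> L_carrier G" unfolding \<phi>_def using half_automorphism_closed[OF h] by auto
    show "\<phi> klein_one = (klein_one, \<one>)" unfolding \<phi>_def by (rule half_automorphism_one[OF h])
    show "A = klein_one" if "fst (\<phi> A) = klein_one" for A
      using that half_automorphism_fst_outside_oneM[OF h _ one_closed y] unfolding \<phi>_def by blast
  qed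
  moreover have "f ` K1 G = range \<phi>" unfolding K1_def \<phi>_def by auto
  ultimately show ?thesis by simp
qed

end

theorem proposition4p2:
  fixes G :: "('a, 'b) monoid_scheme"
    and f :: "klein \<times> 'a \<Rightarrow> klein \<times> 'a"
  assumes "comm_group G"
    and "finite (carrier G)"
    and "group_exponent G > 2"
    and "half_automorphism G f"
  shows "f ` K1 G \<in> H_M G"
  using comm_group.half_automorphism_image_K1_in_H_M[OF assms(1,3,4)] .

end
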